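(* Let $T$ be a non-meagre subset with the Baire property of a metric space $X$, and let $G$ be a normed group, Baire in its norm topology, acting separately continuously and transitively on $X$ with the Nikodym property. Then for every convergent sequence $x_n\to x_0$ in $X$ there exist $\tau\in G$ and an integer $N$ such that $\tau x_0\in T$ and \[\{\tau(x_n):n>N\}\subseteq T.\]
   Context: A normed group is a group with a group-norm $\|\cdot\|$ (subadditive, $\|t\|>0$ for $t\ne e_G$, $\|e_G\|=0$, $\|t^{-1}\|=\|t\|$); its norm topology is that of $d_R(s,t)=\|st^{-1}\|$. A separately continuous action $\varphi:G\times X\to X$ ($\varphi(e_G,x)=x$, $\varphi(gh,x)=\varphi(g,\varphi(h,x))$, write $gx=g(x)=\varphi(g,x)$) has $x\mapsto g(x)$ continuous for each $g$ and $g\mapsto g(x)$ continuous for each $x$; transitive means for all $x,y$ some $g$ has $g(x)=y$. Nikodym property: for every non-empty open neighbourhood $U$ of $e_G$ and every $x$, $Ux=\{u(x):u\in U\}$ contains a non-meagre set with the Baire property. *)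

theory Defs
  imports "HOL-Analysis.Analysis" "HOL-Algebra.Group"
begin

definition nowhere_dense_in :: "'a topology \<Rightarrow> 'a set \<Rightarrow> bool" where
  "nowhere_dense_in X A \<longleftrightarrow> A \<subseteq> topspace X \<and> X interior_of (X closure_of A) = {}"

definition meagre_in :: "'a topology \<Rightarrow> 'a set \<Rightarrow> bool" where
  "meagre_in X A \<longleftrightarrow> A \<subseteq> topspace X \<and>
     (\<exists>F :: nat \<Rightarrow> 'a set. (\<forall>n. nowhere_dense_in X (F n)) \<and> A \<subseteq> (\<Union>n. F n))"

definition baire_property_in :: "'a topology \<Rightarrow> 'a set \<Rightarrow> bool" where
  "baire_property_in X A \<longleftrightarrow> A \<subseteq> topspace X \<and>
     (\<exists>U. openin X U \<and> meagre_in X ((A - U) \<union> (U - A)))"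

definition Baire_space :: "'a topology \<Rightarrow> bool" where
  "Baire_space X \<longleftrightarrow> (\<forall>U. openin X U \<and> U \<noteq> {} \<longrightarrow> \<not> meagre_in X U)"

definition group_norm :: "('g, 'b) monoid_scheme \<Rightarrow> ('g \<Rightarrow> real) \<Rightarrow> bool" where
  "group_norm G nm \<longleftrightarrow>
     (\<forall>s\<in>carrier G. \<forall>t\<in>carrier G. nm (s \<otimes>\<^bsub>G\<^esub> t) \<le> nm s + nm t) \<and>
     (\<forall>t\<in>carrier G. t \<noteq> \<one>\<^bsub>G\<^esub> \<longrightarrow> nm t > 0) \<and>
     nm \<one>\<^bsub>G\<^esub> = 0 \<and>
     (\<forall>t\<in>carrier G. nm (inv\<^bsub>G\<^esub> t) = nm t)"

text \<open>Norm topology: the topology of the right metric d_R(s,t) = nm (s t^{-1}) on carrier G.\<close>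
definition norm_topology :: "('g, 'b) monoid_scheme \<Rightarrow> ('g \<Rightarrow> real) \<Rightarrow> 'g topology" where
  "norm_topology G nm = topology (\<lambda>U. U \<subseteq> carrier G \<and>
     (\<forall>u\<in>U. \<exists>e>0. \<forall>v\<in>carrier G. nm (v \<otimes>\<^bsub>G\<^esub> inv\<^bsub>G\<^esub> u) < e \<longrightarrow> v \<in> U))"

definition sep_cont_action ::
    "('g, 'b) monoid_scheme \<Rightarrow> ('g \<Rightarrow> real) \<Rightarrow> ('g \<Rightarrow> 'x::topological_space \<Rightarrow> 'x) \<Rightarrow> bool" where
  "sep_cont_action G nm \<phi> \<longleftrightarrow>
     (\<forall>x. \<phi> \<one>\<^bsub>G\<^esub> x = x) \<and>
     (\<forall>g\<in>carrier G. \<forall>h\<in>carrier G. \<forall>x. \<phi> (g \<otimes>\<^bsub>G\<^esub> h) x = \<phi> g (\<phi> h x)) \<and>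
     (\<forall>g\<in>carrier G. continuous_on UNIV (\<phi> g)) \<and>
     (\<forall>x. continuous_map (norm_topology G nm) euclidean (\<lambda>g. \<phi> g x))"

definition transitive_action :: "('g, 'b) monoid_scheme \<Rightarrow> ('g \<Rightarrow> 'x \<Rightarrow> 'x) \<Rightarrow> bool" where
  "transitive_action G \<phi> \<longleftrightarrow> (\<forall>x y. \<exists>g\<in>carrier G. \<phi> g x = y)"

definition nikodym_property ::
    "('g, 'b) monoid_scheme \<Rightarrow> ('g \<Rightarrow> real) \<Rightarrow> ('g \<Rightarrow> 'x::topological_space \<Rightarrow> 'x) \<Rightarrow> bool" where
  "nikodym_property G nm \<phi> \<longleftrightarrow>
     (\<forall>U x. openin (norm_topology G nm) U \<and> \<one>\<^bsub>G\<^esub> \<in> U \<longrightarrow>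
        (\<exists>S. S \<subseteq> (\<lambda>u. \<phi> u x) ` U \<and> \<not> meagre_in euclidean S \<and> baire_property_in euclidean S))"

end

theory Submission
  imports Defs
begin

text \<open>Write \<open>T = U \<triangle> M\<close> with \<open>U\<close> open and \<open>M\<close> meagre; \<open>U \<noteq> {}\<close> as \<open>T\<close> is
  non-meagre. By the Nikodym property the set of \<open>g\<close> moving a fixed point into a nowhere dense
  set is nowhere dense in \<open>G\<close>, so the \<open>g\<close> moving one of the countably many points
  \<open>x\<^sub>0, x\<^sub>1, \<dots>\<close> into \<open>M\<close> form a meagre set. The set of \<open>g\<close> with \<open>g x\<^sub>0 \<in> U\<close> is open, and
  non-empty by transitivity, hence non-meagre as \<open>G\<close> is Baire; a \<open>\<tau>\<close> in it outside the meagre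
  set satisfies \<open>\<tau> x\<^sub>0 \<in> T\<close>, and \<open>\<tau> x\<^sub>n \<in> U\<close> eventually by continuity of \<open>\<tau>\<close>, so \<open>\<tau> x\<^sub>n \<in> T\<close>.\<close>

lemma istopology_radius_open:
  fixes d :: "'a \<Rightarrow> 'a \<Rightarrow> real"
  shows "istopology (\<lambda>U. U \<subseteq> C \<and> (\<forall>u\<in>U. \<exists>e>0. \<forall>v\<in>C. d v u < e \<longrightarrow> v \<in> U))"
  unfolding istopology_def
proof (rule conjI; intro allI impI)
  fix S T :: "'a set"
  assume S: "S \<subseteq> C \<and> (\<forall>u\<in>S. \<exists>e>0. \<forall>v\<in>C. d v u < e \<longrightarrow> v \<in> S)"
    and T: "T \<subseteq> C \<and> (\<forall>u\<in>T. \<exists>e>0. \<forall>v\<in>C. d v u < e \<longrightarrow> v \<in> T)"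
  show "S \<inter> T \<subseteq> C \<and> (\<forall>u\<in>S \<inter> T. \<exists>e>0. \<forall>v\<in>C. d v u < e \<longrightarrow> v \<in> S \<inter> T)"
  proof (intro conjI ballI)
    show "S \<inter> T \<subseteq> C" using S by blast
    fix u assume "u \<in> S \<inter> T"
    then obtain e1 e2 where "e1 > 0" "\<forall>v\<in>C. d v u < e1 \<longrightarrow> v \<in> S"
      and "e2 > 0" "\<forall>v\<in>C. d v u < e2 \<longrightarrow> v \<in> T"
      using S T by blast
    then show "\<exists>e>0. \<forall>v\<in>C. d v u < e \<longrightarrow> v \<in> S \<inter> T"
      by (intro exI[of _ "min e1 e2"]) auto
  qed
next
  fix K :: "'a set set"
  assume K: "\<forall>S\<in>K. S \<subseteq> C \<and> (\<forall>u\<in>S. \<exists>e>0. \<forall>v\<in>C. d v u < e \<longrightarrow> v \<in> S)"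
  show "\<Union>K \<subseteq> C \<and> (\<forall>u\<in>\<Union>K. \<exists>e>0. \<forall>v\<in>C. d v u < e \<longrightarrow> v \<in> \<Union>K)"
  proof (intro conjI ballI)
    show "\<Union>K \<subseteq> C" using K by (simp add: Union_least)
    fix u assume "u \<in> \<Union>K"
    then obtain S where "S \<in> K" "u \<in> S" by blast
    with K obtain e where "e > 0" "\<forall>v\<in>C. d v u < e \<longrightarrow> v \<in> S" by meson
    with \<open>S \<in> K\<close> show "\<exists>e>0. \<forall>v\<in>C. d v u < e \<longrightarrow> v \<in> \<Union>K" by blast
  qed
qed

lemma openin_norm_topology:
  "openin (norm_topology G nm) U \<longleftrightarrow> U \<subseteq> carrier G \<and>
     (\<forall>u\<in>U. \<exists>e>0. \<forall>v\<in>carrier G. nm (v \<otimes>\<^bsub>G\<^esub> inv\<^bsub>G\<^esub> u) < e \<longrightarrow> v \<in> U)"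
  unfolding norm_topology_def
  using topology_inverse'[OF istopology_radius_open[of "carrier G" "\<lambda>v u. nm (v \<otimes>\<^bsub>G\<^esub> inv\<^bsub>G\<^esub> u)"]]
  by simp

lemma topspace_norm_topology: "topspace (norm_topology G nm) = carrier G"
proof (rule subset_antisym)
  show "topspace (norm_topology G nm) \<subseteq> carrier G"
    using openin_topspace[of "norm_topology G nm"] unfolding openin_norm_topology by blast
  have "openin (norm_topology G nm) (carrier G)"
    unfolding openin_norm_topology by (auto intro: exI[of _ 1])
  then show "carrier G \<subseteq> topspace (norm_topology G nm)"
    by (rule openin_subset)
qed

lemma openin_norm_topology_right_translate:
  fixes G (structure)
  assumes "group G" and W: "openin (norm_topology G nm) W" and g: "g \<in> carrier G"
  shows "openin (norm_topology G nm) {u \<in> carrier G. u \<otimes> g \<in> W}"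
  unfolding openin_norm_topology
proof (intro conjI ballI)
  interpret group G by fact
  fix u assume "u \<in> {u \<in> carrier G. u \<otimes> g \<in> W}"
  then have u: "u \<in> carrier G" "u \<otimes> g \<in> W" by simp_all
  then obtain e where "e > 0" and e: "\<forall>v\<in>carrier G. nm (v \<otimes> inv (u \<otimes> g)) < e \<longrightarrow> v \<in> W"
    using W unfolding openin_norm_topology by meson
  have "v \<otimes> g \<otimes> inv (u \<otimes> g) = v \<otimes> inv u" if "v \<in> carrier G" for v
    using that u g by (simp add: inv_mult_group m_assoc flip: m_assoc[of g])
  with \<open>e > 0\<close> e g show "\<exists>e>0. \<forall>v\<in>carrier G. nm (v \<otimes> inv u) < e \<longrightarrow> v \<in> {u \<in> carrier G. u \<otimes> g \<in> W}"
    by (intro exI[of _ e]) auto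
qed auto

lemma meagre_in_subset: "meagre_in X A \<Longrightarrow> B \<subseteq> A \<Longrightarrow> meagre_in X B"
  unfolding meagre_in_def by blast

lemma nowhere_dense_imp_meagre_in: "nowhere_dense_in X A \<Longrightarrow> meagre_in X A"
  unfolding meagre_in_def nowhere_dense_in_def
  by (intro conjI exI[of _ "\<lambda>_. A"]) (auto simp: nowhere_dense_in_def)

lemma nowhere_dense_in_closure_of: "nowhere_dense_in X A \<Longrightarrow> nowhere_dense_in X (X closure_of A)"
  unfolding nowhere_dense_in_def by (simp add: closure_of_subset_topspace)

lemma Baire_space_openin_not_subset_meagre:
  assumes "Baire_space X" "openin X A" "A \<noteq> {}" "meagre_in X B"
  shows "\<exists>a\<in>A. a \<notin> B"
  using assms meagre_in_subset unfolding Baire_space_def by blast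

text \<open>A non-empty open set of such \<open>g\<close>, translated to a neighbourhood of the identity, would
  by the Nikodym property give a non-meagre subset of the closure of \<open>F\<close>.\<close>

lemma nowhere_dense_in_orbit_preimage:
  fixes G (structure) and \<phi> :: "'g \<Rightarrow> 'x::metric_space \<Rightarrow> 'x"
  assumes "group G" and act: "sep_cont_action G nm \<phi>" and nik: "nikodym_property G nm \<phi>"
    and F: "nowhere_dense_in euclidean F"
  shows "nowhere_dense_in (norm_topology G nm) {g \<in> carrier G. \<phi> g p \<in> closure F}"
proof -
  interpret group G by fact
  let ?X = "norm_topology G nm" and ?B = "{g \<in> carrier G. \<phi> g p \<in> closure F}"
  have "continuous_map ?X euclidean (\<lambda>g. \<phi> g p)"
    using act unfolding sep_cont_action_def by blast
  from closedin_continuous_map_preimage[OF this, of "closure F"]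
  have B_closed: "closedin ?X ?B"
    by (simp add: topspace_norm_topology)
  have closure_meagre: "meagre_in euclidean (closure F)"
    using nowhere_dense_imp_meagre_in[OF nowhere_dense_in_closure_of[OF F]] by simp
  have "W = {}" if W: "openin ?X W" "W \<subseteq> ?B" for W
  proof (rule ccontr)
    assume "W \<noteq> {}"
    then obtain g where "g \<in> W" by blast
    with W have g: "g \<in> carrier G" by (auto dest: openin_subset simp: topspace_norm_topology)
    let ?U = "{u \<in> carrier G. u \<otimes> g \<in> W}"
    have "openin ?X ?U" "\<one> \<in> ?U"
      using openin_norm_topology_right_translate[OF \<open>group G\<close> W(1) g] \<open>g \<in> W\<close> g by simp_all
    then obtain S where S: "S \<subseteq> (\<lambda>u. \<phi> u (\<phi> g p)) ` ?U" "\<not> meagre_in euclidean S"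
      using nik unfolding nikodym_property_def by blast
    have "\<phi> u (\<phi> g p) = \<phi> (u \<otimes> g) p" if "u \<in> carrier G" for u
      using act that g unfolding sep_cont_action_def by simp
    with W(2) have "(\<lambda>u. \<phi> u (\<phi> g p)) ` ?U \<subseteq> closure F" by auto
    with S closure_meagre meagre_in_subset show False by blast
  qed
  then have "?X interior_of ?B = {}"
    unfolding interior_of_eq_empty by blast
  then show ?thesis
    unfolding nowhere_dense_in_def closure_of_closedin[OF B_closed] by (simp add: topspace_norm_topology)
qed

lemma meagre_in_orbit_preimage:
  fixes \<phi> :: "'g \<Rightarrow> 'x::metric_space \<Rightarrow> 'x" and p :: "nat \<Rightarrow> 'x"
  assumes "group G" "sep_cont_action G nm \<phi>" "nikodym_property G nm \<phi>"
    and "meagre_in euclidean M"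
  shows "meagre_in (norm_topology G nm) {g \<in> carrier G. \<exists>n. \<phi> g (p n) \<in> M}"
proof -
  obtain F :: "nat \<Rightarrow> 'x set" where F: "\<And>k. nowhere_dense_in euclidean (F k)" and M: "M \<subseteq> (\<Union>k. F k)"
    using \<open>meagre_in euclidean M\<close> unfolding meagre_in_def by blast
  define Bad where
    "Bad j = {g \<in> carrier G. \<phi> g (p (fst (prod_decode j))) \<in> closure (F (snd (prod_decode j)))}" for j
  have "nowhere_dense_in (norm_topology G nm) (Bad j)" for j
    unfolding Bad_def using nowhere_dense_in_orbit_preimage[OF assms(1-3) F] by blast
  moreover have "{g \<in> carrier G. \<exists>n. \<phi> g (p n) \<in> M} \<subseteq> (\<Union>j. Bad j)"
  proof
    fix g assume "g \<in> {g \<in> carrier G. \<exists>n. \<phi> g (p n) \<in> M}"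
    then obtain n k where "g \<in> carrier G" "\<phi> g (p n) \<in> F k" using M by blast
    then have "g \<in> Bad (prod_encode (n, k))"
      unfolding Bad_def using closure_subset by auto
    then show "g \<in> (\<Union>j. Bad j)" by blast
  qed
  ultimately show ?thesis
    unfolding meagre_in_def topspace_norm_topology by (intro conjI exI[of _ Bad]) auto
qed

theorem proposition3:
  fixes G :: "('g, 'b) monoid_scheme" and nm :: "'g \<Rightarrow> real"
    and \<phi> :: "'g \<Rightarrow> 'x::metric_space \<Rightarrow> 'x" and T :: "'x set"
  assumes "group G" and "group_norm G nm"
    and "Baire_space (norm_topology G nm)"
    and "sep_cont_action G nm \<phi>" and "transitive_action G \<phi>"
    and "nikodym_property G nm \<phi>"
    and "\<not> meagre_in euclidean T" and "baire_property_in euclidean T"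
  shows "\<forall>(x :: nat \<Rightarrow> 'x) x0. x \<longlonglongrightarrow> x0 \<longrightarrow>
           (\<exists>\<tau>\<in>carrier G. \<exists>N::nat. \<phi> \<tau> x0 \<in> T \<and> (\<forall>n>N. \<phi> \<tau> (x n) \<in> T))"
proof (intro allI impI)
  fix x :: "nat \<Rightarrow> 'x" and x0 assume lim: "x \<longlonglongrightarrow> x0"
  obtain U where "open U" and M: "meagre_in euclidean ((T - U) \<union> (U - T))"
    using \<open>baire_property_in euclidean T\<close> unfolding baire_property_in_def by auto
  have "U \<noteq> {}"
  proof
    assume "U = {}"
    then have "T \<subseteq> (T - U) \<union> (U - T)" by blast
    with M \<open>\<not> meagre_in euclidean T\<close> show False by (metis meagre_in_subset)
  qed
  then obtain g where g: "g \<in> carrier G" "\<phi> g x0 \<in> U"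
    using \<open>transitive_action G \<phi>\<close> unfolding transitive_action_def by (metis equals0I)
  let ?A = "{g \<in> carrier G. \<phi> g x0 \<in> U}"
    and ?Bad = "{g \<in> carrier G. \<exists>n. \<phi> g (case_nat x0 x n) \<in> (T - U) \<union> (U - T)}"
  have "openin (norm_topology G nm) ?A"
    using openin_continuous_map_preimage[of "norm_topology G nm" euclidean "\<lambda>g. \<phi> g x0" U]
      \<open>open U\<close> \<open>sep_cont_action G nm \<phi>\<close>
    unfolding sep_cont_action_def by (simp add: topspace_norm_topology)
  moreover have "?A \<noteq> {}" using g by blast
  moreover have "meagre_in (norm_topology G nm) ?Bad"
    using meagre_in_orbit_preimage[OF \<open>group G\<close> \<open>sep_cont_action G nm \<phi>\<close> \<open>nikodym_property G nm \<phi>\<close> M] .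
  ultimately have "\<exists>\<tau>\<in>?A. \<tau> \<notin> ?Bad"
    by (rule Baire_space_openin_not_subset_meagre[OF \<open>Baire_space _\<close>])
  then obtain \<tau> where \<tau>: "\<tau> \<in> carrier G" "\<phi> \<tau> x0 \<in> U" and "\<tau> \<notin> ?Bad"
    by blast
  then have avoid: "\<phi> \<tau> (case_nat x0 x n) \<notin> U - T" for n
    by blast
  have "continuous_on UNIV (\<phi> \<tau>)"
    using \<open>sep_cont_action G nm \<phi>\<close> \<tau>(1) unfolding sep_cont_action_def by blast
  then have "(\<lambda>n. \<phi> \<tau> (x n)) \<longlonglongrightarrow> \<phi> \<tau> x0"
    using lim by (simp add: continuous_on_eq_continuous_at isCont_tendsto_compose)
  then have "eventually (\<lambda>n. \<phi> \<tau> (x n) \<in> U) sequentially"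
    using \<open>open U\<close> \<tau>(2) by (rule topological_tendstoD)
  then obtain N where N: "\<And>n. n \<ge> N \<Longrightarrow> \<phi> \<tau> (x n) \<in> U"
    unfolding eventually_sequentially by blast
  have "\<phi> \<tau> x0 \<in> T"
    using \<tau>(2) avoid[of 0] by simp
  moreover have "\<phi> \<tau> (x n) \<in> T" if "n > N" for n
    using N[of n] that avoid[of "Suc n"] by simp
  ultimately show "\<exists>\<tau>\<in>carrier G. \<exists>N::nat. \<phi> \<tau> x0 \<in> T \<and> (\<forall>n>N. \<phi> \<tau> (x n) \<in> T)"
    using \<tau>(1) by blast
qed

end
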